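(* Let $\mathcal{A}$ be a strong $T_0$-family and $r\in\mathbb{R}$. Let $\{x_\xi:\xi<\omega_1\}\subseteq c_{00}(\omega_1)$ consist of vectors with pairwise disjoint supports such that $\|x_\xi\|_\mathcal{A}=r$ for all $\xi<\omega_1$. Then there are $\xi<\eta<\omega_1$ such that $\|x_\xi-x_\eta\|_\mathcal{A}=\sqrt2\,r$, and there are $\xi<\eta<\omega_1$ such that $\|x_\xi-x_\eta\|_\mathcal{A}=r$.
   Context: $c_{00}(\omega_1)$ is the set of $x\in\mathbb{R}^{\omega_1}$ with finite support $\text{supp}(x)=\{\alpha:x(\alpha)\ne0\}$. For a family $\mathcal{A}$ of finite subsets of $\omega_1$, $\|x\|_\mathcal{A}=\sup_{A\in\mathcal{A}}\sqrt{\sum_{\alpha\in A}x(\alpha)^2}$. For disjoint $A,B$, $A\otimes B=\{\{\alpha,\beta\}:\alpha\in A,\beta\in B\}$. A function $c=(c_0,c_1):[\omega_1]^2\to I\times J$ ($0,1\in I$, $J\ne\emptyset$) is a $T$-coloring if for every uncountable pairwise disjoint family $\{\{a_\xi(0),a_\xi(1)\}:\xi<\omega_1\}$ of pairs and all $(i_0,j_0),(i_1,j_1)\in I\times J$ there are $\xi<\eta$ with $c(\{a_\xi(0),a_\eta(0)\})=(i_0,j_0)$, $c(\{a_\xi(1),a_\eta(1)\})=(i_1,j_1)$; it is a strong $T$-coloring if moreover for every uncountable pairwise disjoint family $\{A_\xi:\xi<\omega_1\}$ of finite subsets of $\omega_1$ there are $\xi<\eta$ with $c_0[A_\xi\otimes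 A_\eta]=\{0\}$ and $\xi<\eta$ with $c_0[A_\xi\otimes A_\eta]=\{1\}$. A strong $T_0$-family is $\mathcal{A}_c=\{a\subseteq\omega_1\text{ finite}:c_0[[a]^2]\subseteq\{0\}\}$ for a strong $T$-coloring $c$. *)

theory Defs
  imports "HOL-Analysis.Analysis"
begin

text \<open>The type 'a, with its well-order, represents omega_1: it is uncountable and
every proper initial segment is countable.\<close>
definition omega1_type :: "'a::wellorder itself \<Rightarrow> bool" where
  "omega1_type _ \<longleftrightarrow> uncountable (UNIV :: 'a set) \<and> (\<forall>x::'a. countable {y. y < x})"

definition supp :: "('a \<Rightarrow> real) \<Rightarrow> 'a set" where
  "supp x = {\<alpha>. x \<alpha> \<noteq> 0}"

definition c00 :: "('a \<Rightarrow> real) set" where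
  "c00 = {x. finite (supp x)}"

definition normA :: "'a set set \<Rightarrow> ('a \<Rightarrow> real) \<Rightarrow> real" where
  "normA \<A> x = (SUP A\<in>\<A>. sqrt (\<Sum>\<alpha>\<in>A. (x \<alpha>)\<^sup>2))"

definition otimes :: "'a set \<Rightarrow> 'a set \<Rightarrow> 'a set set" where
  "otimes A B = {{\<alpha>, \<beta>} | \<alpha> \<beta>. \<alpha> \<in> A \<and> \<beta> \<in> B}"

definition pairs :: "'a set \<Rightarrow> 'a set set" where
  "pairs a = {{\<alpha>, \<beta>} | \<alpha> \<beta>. \<alpha> \<in> a \<and> \<beta> \<in> a \<and> \<alpha> \<noteq> \<beta>}"

text \<open>A T-coloring c : [omega_1]^2 \<rightarrow> I \<times> J (with 0,1 \<in> I, J nonempty).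
A pairwise disjoint uncountable family of pairs is indexed by xi < omega_1 via a0, a1.\<close>
definition T_coloring :: "('a::wellorder set \<Rightarrow> ('i::zero_neq_one \<times> 'j)) \<Rightarrow> 'i set \<Rightarrow> 'j set \<Rightarrow> bool" where
  "T_coloring c I J \<longleftrightarrow>
     0 \<in> I \<and> 1 \<in> I \<and> J \<noteq> {} \<and>
     (\<forall>\<alpha> \<beta>. \<alpha> \<noteq> \<beta> \<longrightarrow> c {\<alpha>, \<beta>} \<in> I \<times> J) \<and>
     (\<forall>(a0::'a \<Rightarrow> 'a) a1.
        (\<forall>\<xi>. a0 \<xi> \<noteq> a1 \<xi>) \<and>
        (\<forall>\<xi> \<eta>. \<xi> \<noteq> \<eta> \<longrightarrow> {a0 \<xi>, a1 \<xi>} \<inter> {a0 \<eta>, a1 \<eta>} = {}) \<longrightarrow>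
        (\<forall>p0\<in>I \<times> J. \<forall>p1\<in>I \<times> J. \<exists>\<xi> \<eta>. \<xi> < \<eta> \<and>
            c {a0 \<xi>, a0 \<eta>} = p0 \<and> c {a1 \<xi>, a1 \<eta>} = p1))"

definition strong_T_coloring :: "('a::wellorder set \<Rightarrow> ('i::zero_neq_one \<times> 'j)) \<Rightarrow> 'i set \<Rightarrow> 'j set \<Rightarrow> bool" where
  "strong_T_coloring c I J \<longleftrightarrow> T_coloring c I J \<and>
     (\<forall>A :: 'a \<Rightarrow> 'a set.
        (\<forall>\<xi>. finite (A \<xi>) \<and> A \<xi> \<noteq> {}) \<and>
        (\<forall>\<xi> \<eta>. \<xi> \<noteq> \<eta> \<longrightarrow> A \<xi> \<inter> A \<eta> = {}) \<longrightarrow>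
        (\<exists>\<xi> \<eta>. \<xi> < \<eta> \<and> (fst \<circ> c) ` otimes (A \<xi>) (A \<eta>) = {0}) \<and>
        (\<exists>\<xi> \<eta>. \<xi> < \<eta> \<and> (fst \<circ> c) ` otimes (A \<xi>) (A \<eta>) = {1}))"

definition T0_family :: "('a set \<Rightarrow> ('i::zero_neq_one \<times> 'j)) \<Rightarrow> 'a set set" where
  "T0_family c = {a. finite a \<and> (fst \<circ> c) ` pairs a \<subseteq> {0}}"

end

theory Submission
  imports Defs
begin

text \<open>Each \<open>x\<^sub>\<xi>\<close> attains its norm \<open>r\<close> on a set \<open>a\<^sub>\<xi>\<close> of the family inside its support.
  Since the supports are disjoint, the square sum of \<open>x\<^sub>\<xi> - x\<^sub>\<eta>\<close> over a member \<open>b\<close> of the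
  family splits into the square sums of \<open>x\<^sub>\<xi>\<close> and \<open>x\<^sub>\<eta>\<close> over \<open>b\<close>, so
  \<open>\<parallel>x\<^sub>\<xi> - x\<^sub>\<eta>\<parallel> \<le> \<surd>2 r\<close>. The strong coloring applied to the sets \<open>a\<^sub>\<xi>\<close> yields \<open>\<xi> < \<eta>\<close>
  with \<open>a\<^sub>\<xi> \<union> a\<^sub>\<eta>\<close> in the family, which witnesses \<open>\<parallel>x\<^sub>\<xi> - x\<^sub>\<eta>\<parallel> = \<surd>2 r\<close>. Applied to the
  supports it yields \<open>\<xi> < \<eta>\<close> such that no member of the family meets both supports,
  so that \<open>\<parallel>x\<^sub>\<xi> - x\<^sub>\<eta>\<parallel> = r\<close>.\<close>

definition hereditary :: "'a set set \<Rightarrow> bool" where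
  "hereditary \<A> \<longleftrightarrow> (\<forall>a\<in>\<A>. \<forall>b\<subseteq>a. b \<in> \<A>)"

lemma omega1_type_ex_less:
  assumes "omega1_type TYPE('a::wellorder)"
  obtains \<xi> \<eta> :: "'a::wellorder" where "\<xi> < \<eta>"
proof -
  obtain \<xi> :: 'a where True by blast
  have "UNIV \<noteq> {\<xi>}"
    using assms unfolding omega1_type_def by (metis countable_empty countable_insert)
  then obtain \<eta> where "\<eta> \<noteq> \<xi>" by blast
  then show thesis using that by (metis neqE)
qed

lemma finite_supp_diff:
  assumes "finite (supp u)" "finite (supp v)"
  shows "finite (supp (u - v))"
  by (rule finite_subset[of _ "supp u \<union> supp v"]) (use assms in \<open>auto simp: supp_def\<close>)

lemma sum_sq_diff_disjoint_supp:
  assumes "supp u \<inter> supp v = {}"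
  shows "(\<Sum>\<alpha>\<in>b. ((u - v) \<alpha>)\<^sup>2) = (\<Sum>\<alpha>\<in>b. (u \<alpha>)\<^sup>2) + (\<Sum>\<alpha>\<in>b. (v \<alpha>)\<^sup>2)"
proof -
  have "((u - v) \<alpha>)\<^sup>2 = (u \<alpha>)\<^sup>2 + (v \<alpha>)\<^sup>2" for \<alpha>
  proof -
    have "u \<alpha> * v \<alpha> = 0" using assms unfolding supp_def by auto
    then show ?thesis by (simp add: power2_eq_square algebra_simps)
  qed
  then show ?thesis by (simp add: sum.distrib)
qed

lemma sum_sq_disjoint_supp:
  assumes "a \<inter> supp y = {}"
  shows "(\<Sum>\<alpha>\<in>a. (y \<alpha>)\<^sup>2) = 0"
  using assms unfolding supp_def by (intro sum.neutral) auto

lemma sum_sq_le_sum_sq_inter_supp: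
  assumes "finite (supp y)"
  shows "(\<Sum>\<alpha>\<in>a. (y \<alpha>)\<^sup>2) \<le> (\<Sum>\<alpha>\<in>a \<inter> supp y. (y \<alpha>)\<^sup>2)"
proof (cases "finite a")
  case True
  have "(\<Sum>\<alpha>\<in>a. (y \<alpha>)\<^sup>2) = (\<Sum>\<alpha>\<in>a \<inter> supp y. (y \<alpha>)\<^sup>2)"
    using True by (rule sum.mono_neutral_right) (auto simp: supp_def)
  then show ?thesis by simp
qed (simp add: sum_nonneg)

lemma bdd_above_normA:
  assumes "finite (supp y)"
  shows "bdd_above ((\<lambda>a. sqrt (\<Sum>\<alpha>\<in>a. (y \<alpha>)\<^sup>2)) ` \<A>)"
proof (rule bdd_aboveI2)
  fix a
  have "(\<Sum>\<alpha>\<in>a. (y \<alpha>)\<^sup>2) \<le> (\<Sum>\<alpha>\<in>a \<inter> supp y. (y \<alpha>)\<^sup>2)"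
    by (rule sum_sq_le_sum_sq_inter_supp[OF assms])
  also have "\<dots> \<le> (\<Sum>\<alpha>\<in>supp y. (y \<alpha>)\<^sup>2)"
    using assms by (intro sum_mono2) auto
  finally show "sqrt (\<Sum>\<alpha>\<in>a. (y \<alpha>)\<^sup>2) \<le> sqrt (\<Sum>\<alpha>\<in>supp y. (y \<alpha>)\<^sup>2)" by simp
qed

lemma normA_upper:
  assumes "finite (supp y)" "a \<in> \<A>"
  shows "sqrt (\<Sum>\<alpha>\<in>a. (y \<alpha>)\<^sup>2) \<le> normA \<A> y"
  unfolding normA_def using bdd_above_normA[OF assms(1)] assms(2) by (rule cSUP_upper2) simp

lemma sum_sq_le_normA_sq:
  assumes "finite (supp y)" "a \<in> \<A>"
  shows "(\<Sum>\<alpha>\<in>a. (y \<alpha>)\<^sup>2) \<le> (normA \<A> y)\<^sup>2"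
  using normA_upper[OF assms] by (rule sqrt_le_D)

lemma normA_least:
  assumes "\<A> \<noteq> {}" "\<And>a. a \<in> \<A> \<Longrightarrow> sqrt (\<Sum>\<alpha>\<in>a. (y \<alpha>)\<^sup>2) \<le> M"
  shows "normA \<A> y \<le> M"
  unfolding normA_def using assms by (intro cSUP_least) auto

lemma normA_eqI:
  assumes "finite (supp y)" "a \<in> \<A>" "(\<Sum>\<alpha>\<in>a. (y \<alpha>)\<^sup>2) = M\<^sup>2" "0 \<le> M"
    and "\<And>b. b \<in> \<A> \<Longrightarrow> (\<Sum>\<alpha>\<in>b. (y \<alpha>)\<^sup>2) \<le> M\<^sup>2"
  shows "normA \<A> y = M"
proof (rule antisym)
  show "normA \<A> y \<le> M"
    using assms(2,4,5) by (intro normA_least) (auto intro: real_le_lsqrt)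
  show "M \<le> normA \<A> y"
    using normA_upper[OF assms(1,2)] assms(3,4) by simp
qed

lemma normA_nonneg:
  assumes "finite (supp y)" "{} \<in> \<A>"
  shows "0 \<le> normA \<A> y"
  using normA_upper[OF assms] by simp

lemma normA_eq_0D:
  assumes "finite (supp y)" "\<And>\<alpha>. {\<alpha>} \<in> \<A>" "normA \<A> y = 0"
  shows "y = (\<lambda>_. 0)"
proof
  show "y \<alpha> = 0" for \<alpha>
    using normA_upper[OF assms(1,2)] assms(3) by simp
qed

lemma normA_zero:
  assumes "{} \<in> \<A>"
  shows "normA \<A> (\<lambda>_. 0) = 0"
  using assms by (intro normA_eqI[of _ "{}"]) (auto simp: supp_def)

lemma normA_attained:
  assumes "hereditary \<A>" "{} \<in> \<A>" "finite (supp y)"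
  obtains a where "a \<in> \<A>" "a \<subseteq> supp y" "(\<Sum>\<alpha>\<in>a. (y \<alpha>)\<^sup>2) = (normA \<A> y)\<^sup>2"
proof -
  define S where "S = {b \<in> \<A>. b \<subseteq> supp y}"
  have "finite S" unfolding S_def using assms(3) by (auto intro: finite_subset[of _ "Pow (supp y)"])
  moreover have "{} \<in> S" unfolding S_def using assms(2) by simp
  ultimately obtain a where a: "a \<in> S"
    and a_max: "Max ((\<lambda>b. \<Sum>\<alpha>\<in>b. (y \<alpha>)\<^sup>2) ` S) = (\<Sum>\<alpha>\<in>a. (y \<alpha>)\<^sup>2)"
    by (metis obtains_MAX empty_iff)
  have "normA \<A> y = sqrt (\<Sum>\<alpha>\<in>a. (y \<alpha>)\<^sup>2)"
  proof (rule normA_eqI[OF assms(3)])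
    show "a \<in> \<A>" using a unfolding S_def by simp
    fix b assume "b \<in> \<A>"
    then have "b \<inter> supp y \<in> S"
      using assms(1) unfolding S_def hereditary_def by blast
    then have "(\<Sum>\<alpha>\<in>b \<inter> supp y. (y \<alpha>)\<^sup>2) \<le> (\<Sum>\<alpha>\<in>a. (y \<alpha>)\<^sup>2)"
      using \<open>finite S\<close> a_max by (metis Max_ge finite_imageI image_eqI)
    then show "(\<Sum>\<alpha>\<in>b. (y \<alpha>)\<^sup>2) \<le> (sqrt (\<Sum>\<alpha>\<in>a. (y \<alpha>)\<^sup>2))\<^sup>2"
      using sum_sq_le_sum_sq_inter_supp[OF assms(3), of b] by (simp add: sum_nonneg)
  qed (simp_all add: sum_nonneg)
  then show thesis
    using that a unfolding S_def by (simp add: sum_nonneg) blast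
qed

lemma empty_in_T0_family: "{} \<in> T0_family c"
  unfolding T0_family_def pairs_def by auto

lemma singleton_in_T0_family: "{\<alpha>} \<in> T0_family c"
  unfolding T0_family_def pairs_def by auto

lemma finite_T0_family: "a \<in> T0_family c \<Longrightarrow> finite a"
  unfolding T0_family_def by simp

lemma hereditary_T0_family: "hereditary (T0_family c)"
proof -
  have "pairs b \<subseteq> pairs a" if "b \<subseteq> a" for a b :: "'a set"
    using that unfolding pairs_def by blast
  then show ?thesis
    unfolding hereditary_def T0_family_def by (blast intro: finite_subset)
qed

lemma pairs_Un_subset: "pairs (a \<union> b) \<subseteq> pairs a \<union> pairs b \<union> otimes a b"
  unfolding pairs_def otimes_def by (auto simp: insert_commute)

lemma T0_family_Un:
  assumes "a \<in> T0_family c" "b \<in> T0_family c" "(fst \<circ> c) ` otimes a b \<subseteq> {0}"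
  shows "a \<union> b \<in> T0_family c"
  using assms pairs_Un_subset[of a b] unfolding T0_family_def by blast

lemma T0_family_misses_one:
  assumes "b \<in> T0_family c" "(fst \<circ> c) ` otimes A B \<subseteq> {1}" "A \<inter> B = {}"
  shows "b \<inter> A = {} \<or> b \<inter> B = {}"
proof (rule ccontr)
  assume "\<not> ?thesis"
  then obtain \<alpha> \<beta> where "\<alpha> \<in> b \<inter> A" "\<beta> \<in> b \<inter> B" by blast
  moreover from this have "\<alpha> \<noteq> \<beta>" using assms(3) by blast
  ultimately have "{\<alpha>, \<beta>} \<in> pairs b" "{\<alpha>, \<beta>} \<in> otimes A B"
    unfolding pairs_def otimes_def by blast+
  then have "fst (c {\<alpha>, \<beta>}) = 0" "fst (c {\<alpha>, \<beta>}) = 1"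
    using assms(1,2) unfolding T0_family_def by auto
  then show False by simp
qed

lemma strong_T_coloring_homogeneous:
  fixes c :: "'a::wellorder set \<Rightarrow> ('i::zero_neq_one \<times> 'j)" and A :: "'a \<Rightarrow> 'a set"
  assumes "strong_T_coloring c I J" "i \<in> {0, 1}"
    and "\<And>\<xi>. finite (A \<xi>)" "\<And>\<xi>. A \<xi> \<noteq> {}" "\<And>\<xi> \<eta>. \<xi> \<noteq> \<eta> \<Longrightarrow> A \<xi> \<inter> A \<eta> = {}"
  obtains \<xi> \<eta> where "\<xi> < \<eta>" "(fst \<circ> c) ` otimes (A \<xi>) (A \<eta>) = {i}"
proof -
  have hom: "\<forall>A :: 'a \<Rightarrow> 'a set. (\<forall>\<xi>. finite (A \<xi>) \<and> A \<xi> \<noteq> {}) \<and>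
      (\<forall>\<xi> \<eta>. \<xi> \<noteq> \<eta> \<longrightarrow> A \<xi> \<inter> A \<eta> = {}) \<longrightarrow>
      (\<exists>\<xi> \<eta>. \<xi> < \<eta> \<and> (fst \<circ> c) ` otimes (A \<xi>) (A \<eta>) = {0}) \<and>
      (\<exists>\<xi> \<eta>. \<xi> < \<eta> \<and> (fst \<circ> c) ` otimes (A \<xi>) (A \<eta>) = {1})"
    using assms(1) unfolding strong_T_coloring_def by (rule conjunct2)
  have "(\<forall>\<xi>. finite (A \<xi>) \<and> A \<xi> \<noteq> {}) \<and> (\<forall>\<xi> \<eta>. \<xi> \<noteq> \<eta> \<longrightarrow> A \<xi> \<inter> A \<eta> = {})"
    using assms(3-5) by blast
  from hom[THEN spec[where x = A], THEN mp, OF this]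
  have "\<exists>\<xi> \<eta>. \<xi> < \<eta> \<and> (fst \<circ> c) ` otimes (A \<xi>) (A \<eta>) = {i}"
    using assms(2) by (cases "i = 0") auto
  then show thesis using that by blast
qed

context
  fixes c :: "'a::wellorder set \<Rightarrow> ('i::zero_neq_one \<times> 'j)"
    and I :: "'i set" and J :: "'j set"
    and x :: "'a \<Rightarrow> ('a \<Rightarrow> real)" and r :: real
  assumes strong: "strong_T_coloring c I J"
    and finite_supp: "\<And>\<xi>. finite (supp (x \<xi>))"
    and disjoint_supp: "\<And>\<xi> \<eta>. \<xi> \<noteq> \<eta> \<Longrightarrow> supp (x \<xi>) \<inter> supp (x \<eta>) = {}"
    and norm_eq: "\<And>\<xi>. normA (T0_family c) (x \<xi>) = r"
begin

lemma sum_sq_le_norm_sq: "b \<in> T0_family c \<Longrightarrow> (\<Sum>\<alpha>\<in>b. (x \<xi> \<alpha>)\<^sup>2) \<le> r\<^sup>2"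
  using sum_sq_le_normA_sq[OF finite_supp] norm_eq by metis

lemma sum_sq_diff:
  "\<xi> \<noteq> \<eta> \<Longrightarrow> (\<Sum>\<alpha>\<in>b. ((x \<xi> - x \<eta>) \<alpha>)\<^sup>2) = (\<Sum>\<alpha>\<in>b. (x \<xi> \<alpha>)\<^sup>2) + (\<Sum>\<alpha>\<in>b. (x \<eta> \<alpha>)\<^sup>2)"
  using sum_sq_diff_disjoint_supp[OF disjoint_supp] .

lemma norm_attained:
  obtains a where "a \<in> T0_family c" "a \<subseteq> supp (x \<xi>)" "(\<Sum>\<alpha>\<in>a. (x \<xi> \<alpha>)\<^sup>2) = r\<^sup>2"
  using normA_attained[OF hereditary_T0_family empty_in_T0_family finite_supp] norm_eq by metis

lemma exists_diff_normA_sqrt2: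
  assumes "0 < r"
  shows "\<exists>\<xi> \<eta>. \<xi> < \<eta> \<and> normA (T0_family c) (x \<xi> - x \<eta>) = sqrt 2 * r"
proof -
  have "\<forall>\<xi>. \<exists>a. a \<in> T0_family c \<and> a \<subseteq> supp (x \<xi>) \<and> (\<Sum>\<alpha>\<in>a. (x \<xi> \<alpha>)\<^sup>2) = r\<^sup>2"
    by (metis norm_attained)
  then have "\<exists>a. \<forall>\<xi>. a \<xi> \<in> T0_family c \<and> a \<xi> \<subseteq> supp (x \<xi>) \<and> (\<Sum>\<alpha>\<in>a \<xi>. (x \<xi> \<alpha>)\<^sup>2) = r\<^sup>2"
    by (rule choice)
  then obtain a where a: "\<And>\<xi>. a \<xi> \<in> T0_family c" "\<And>\<xi>. a \<xi> \<subseteq> supp (x \<xi>)"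
    "\<And>\<xi>. (\<Sum>\<alpha>\<in>a \<xi>. (x \<xi> \<alpha>)\<^sup>2) = r\<^sup>2" by blast
  have a_finite: "finite (a \<xi>)" for \<xi> using finite_T0_family[OF a(1)] .
  have a_nonempty: "a \<xi> \<noteq> {}" for \<xi> using a(3)[of \<xi>] assms by auto
  have a_disjoint: "a \<xi> \<inter> a \<eta> = {}" if "\<xi> \<noteq> \<eta>" for \<xi> \<eta>
    using a(2) disjoint_supp[OF that] by blast
  obtain \<xi> \<eta> where "\<xi> < \<eta>" and hom: "(fst \<circ> c) ` otimes (a \<xi>) (a \<eta>) = {0}"
    by (rule strong_T_coloring_homogeneous[where A = a and i = 0, OF strong _ a_finite a_nonempty a_disjoint])
      simp_all
  then have "\<xi> \<noteq> \<eta>" by simp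
  have off: "a \<xi> \<inter> supp (x \<eta>) = {}" "a \<eta> \<inter> supp (x \<xi>) = {}"
    using a(2) disjoint_supp[OF \<open>\<xi> \<noteq> \<eta>\<close>] by blast+
  have sq: "(sqrt 2 * r)\<^sup>2 = r\<^sup>2 + r\<^sup>2" by (simp add: power_mult_distrib)
  have "normA (T0_family c) (x \<xi> - x \<eta>) = sqrt 2 * r"
  proof (rule normA_eqI)
    show "a \<xi> \<union> a \<eta> \<in> T0_family c"
      using T0_family_Un[OF a(1) a(1)] hom by simp
    from a_disjoint[OF \<open>\<xi> \<noteq> \<eta>\<close>]
    have "(\<Sum>\<alpha>\<in>a \<xi> \<union> a \<eta>. ((x \<xi> - x \<eta>) \<alpha>)\<^sup>2)
        = (\<Sum>\<alpha>\<in>a \<xi>. ((x \<xi> - x \<eta>) \<alpha>)\<^sup>2) + (\<Sum>\<alpha>\<in>a \<eta>. ((x \<xi> - x \<eta>) \<alpha>)\<^sup>2)"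
      using a_finite by (intro sum.union_disjoint) auto
    also have "\<dots> = r\<^sup>2 + r\<^sup>2"
      unfolding sum_sq_diff[OF \<open>\<xi> \<noteq> \<eta>\<close>] using a(3) off by (simp add: sum_sq_disjoint_supp)
    finally show "(\<Sum>\<alpha>\<in>a \<xi> \<union> a \<eta>. ((x \<xi> - x \<eta>) \<alpha>)\<^sup>2) = (sqrt 2 * r)\<^sup>2"
      unfolding sq .
    fix b assume "b \<in> T0_family c"
    then show "(\<Sum>\<alpha>\<in>b. ((x \<xi> - x \<eta>) \<alpha>)\<^sup>2) \<le> (sqrt 2 * r)\<^sup>2"
      unfolding sum_sq_diff[OF \<open>\<xi> \<noteq> \<eta>\<close>] sq by (intro add_mono sum_sq_le_norm_sq)
  qed (use finite_supp_diff finite_supp assms in auto)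
  with \<open>\<xi> < \<eta>\<close> show ?thesis by blast
qed

lemma exists_diff_normA_eq:
  assumes "0 < r"
  shows "\<exists>\<xi> \<eta>. \<xi> < \<eta> \<and> normA (T0_family c) (x \<xi> - x \<eta>) = r"
proof -
  have supp_nonempty: "supp (x \<xi>) \<noteq> {}" for \<xi>
  proof
    assume "supp (x \<xi>) = {}"
    then have "x \<xi> = (\<lambda>_. 0)" unfolding supp_def by auto
    then have "r = 0" using norm_eq[of \<xi>] normA_zero[OF empty_in_T0_family[of c]] by simp
    with assms show False by simp
  qed
  obtain \<xi> \<eta> where "\<xi> < \<eta>" and hom: "(fst \<circ> c) ` otimes (supp (x \<xi>)) (supp (x \<eta>)) = {1}"
    by (rule strong_T_coloring_homogeneous[where A = "\<lambda>\<xi>. supp (x \<xi>)" and i = 1,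
          OF strong _ finite_supp supp_nonempty disjoint_supp]) simp_all
  then have "\<xi> \<noteq> \<eta>" by simp
  obtain a where a: "a \<in> T0_family c" "a \<subseteq> supp (x \<xi>)" "(\<Sum>\<alpha>\<in>a. (x \<xi> \<alpha>)\<^sup>2) = r\<^sup>2"
    using norm_attained by metis
  have "normA (T0_family c) (x \<xi> - x \<eta>) = r"
  proof (rule normA_eqI[OF _ a(1)])
    have "a \<inter> supp (x \<eta>) = {}" using a(2) disjoint_supp[OF \<open>\<xi> \<noteq> \<eta>\<close>] by blast
    then show "(\<Sum>\<alpha>\<in>a. ((x \<xi> - x \<eta>) \<alpha>)\<^sup>2) = r\<^sup>2"
      unfolding sum_sq_diff[OF \<open>\<xi> \<noteq> \<eta>\<close>] using a(3) by (simp add: sum_sq_disjoint_supp)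
    fix b assume b: "b \<in> T0_family c"
    then have "b \<inter> supp (x \<xi>) = {} \<or> b \<inter> supp (x \<eta>) = {}"
      using T0_family_misses_one hom disjoint_supp[OF \<open>\<xi> \<noteq> \<eta>\<close>] by (metis order_refl)
    then show "(\<Sum>\<alpha>\<in>b. ((x \<xi> - x \<eta>) \<alpha>)\<^sup>2) \<le> r\<^sup>2"
      unfolding sum_sq_diff[OF \<open>\<xi> \<noteq> \<eta>\<close>] using sum_sq_le_norm_sq[OF b]
      by (auto simp: sum_sq_disjoint_supp)
  qed (use finite_supp_diff finite_supp assms in auto)
  with \<open>\<xi> < \<eta>\<close> show ?thesis by blast
qed

end

theorem lemma4p1:
  fixes c :: "'a::wellorder set \<Rightarrow> ('i::zero_neq_one \<times> 'j)"
    and I :: "'i set" and J :: "'j set"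
    and x :: "'a \<Rightarrow> ('a \<Rightarrow> real)" and r :: real
  assumes "omega1_type TYPE('a)"
    and "strong_T_coloring c I J"
    and "\<And>\<xi>. x \<xi> \<in> c00"
    and "\<And>\<xi> \<eta>. \<xi> \<noteq> \<eta> \<Longrightarrow> supp (x \<xi>) \<inter> supp (x \<eta>) = {}"
    and "\<And>\<xi>. normA (T0_family c) (x \<xi>) = r"
  shows "(\<exists>\<xi> \<eta>. \<xi> < \<eta> \<and> normA (T0_family c) (x \<xi> - x \<eta>) = sqrt 2 * r)
       \<and> (\<exists>\<xi> \<eta>. \<xi> < \<eta> \<and> normA (T0_family c) (x \<xi> - x \<eta>) = r)"
proof -
  have finite_supp: "finite (supp (x \<xi>))" for \<xi>
    using assms(3) unfolding c00_def by simp
  have "0 \<le> r"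
    using normA_nonneg[OF finite_supp empty_in_T0_family] assms(5) by metis
  then consider "r = 0" | "0 < r" by linarith
  then show ?thesis
  proof cases
    case 1
    then have "x \<xi> = (\<lambda>_. 0)" for \<xi>
      using normA_eq_0D[OF finite_supp singleton_in_T0_family] assms(5) by metis
    then have "normA (T0_family c) (x \<xi> - x \<eta>) = 0" for \<xi> \<eta>
      using normA_zero[OF empty_in_T0_family] by (simp add: fun_diff_def)
    moreover obtain \<xi> \<eta> :: 'a where "\<xi> < \<eta>"
      using omega1_type_ex_less[OF assms(1)] .
    ultimately show ?thesis using 1 by auto
  next
    case 2
    show ?thesis
      using exists_diff_normA_sqrt2[where x = x, OF assms(2) finite_supp assms(4,5) 2]
        exists_diff_normA_eq[where x = x, OF assms(2) finite_supp assms(4,5) 2] by blast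
  qed
qed

end
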